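(* Let $\mathbf{A}$ be a 5-dimensional LV algebra with natural basis $e_1,\dots,e_5$ such that $e_2e_4=\frac12(e_2+e_4)$, $e_2e_5=\frac12(e_2+e_5)$, and $e_ie_j\neq\frac12(e_i+e_j)$ for all other pairs of distinct indices $i,j$. Then $\mathrm{Der}(\mathbf{A})=\{0\}$.
   Context: Let $\mathbb{F}$ be a field of characteristic different from $2$. A Lotka–Volterra (LV) algebra of dimension $5$ over $\mathbb{F}$ is a commutative (not necessarily associative) $\mathbb{F}$-algebra $\mathbf{A}$ with a basis $e_1,\dots,e_5$ (the natural basis) such that $e_ie_j=\alpha_{ij}e_i+\alpha_{ji}e_j$ with $\alpha_{ij}\in\mathbb{F}$, $\alpha_{ii}=\frac12$ and $\alpha_{ij}+\alpha_{ji}=1$ for all $i,j$. A derivation is a linear map $D:\mathbf{A}\to\mathbf{A}$ with $D(uv)=D(u)v+uD(v)$ for all $u,v$; $\mathrm{Der}(\mathbf{A})$ is the set of derivations. *)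

theory Defs
  imports "HOL-Analysis.Analysis" "HOL-Library.Numeral_Type"
begin

text \<open>A 5-dimensional algebra with underlying space 'a^5 and natural basis
  e_i = axis i 1 (indices in the type 5; the numeral 5 of type 5 denotes the fifth index).
  Its structure is given by coefficients alpha with e_i e_j = alpha i j e_i + alpha j i e_j,
  extended bilinearly.\<close>

definition lv_basis :: "5 \<Rightarrow> ('a::field)^5" where
  "lv_basis i = axis i 1"

definition lv_mult :: "(5 \<Rightarrow> 5 \<Rightarrow> 'a::field) \<Rightarrow> 'a^5 \<Rightarrow> 'a^5 \<Rightarrow> 'a^5" where
  "lv_mult \<alpha> u v =
     (\<Sum>i\<in>UNIV. \<Sum>j\<in>UNIV. (u$i * v$j) *s (\<alpha> i j *s lv_basis i + \<alpha> j i *s lv_basis j))"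

definition is_LV :: "(5 \<Rightarrow> 5 \<Rightarrow> 'a::field) \<Rightarrow> bool" where
  "is_LV \<alpha> \<longleftrightarrow> (\<forall>i. \<alpha> i i = 1/2) \<and> (\<forall>i j. \<alpha> i j + \<alpha> j i = 1)"

definition is_derivation :: "(5 \<Rightarrow> 5 \<Rightarrow> 'a::field) \<Rightarrow> ('a^5 \<Rightarrow> 'a^5) \<Rightarrow> bool" where
  "is_derivation \<alpha> D \<longleftrightarrow>
     (\<forall>u v. D (u + v) = D u + D v) \<and> (\<forall>c u. D (c *s u) = c *s D u) \<and>
     (\<forall>u v. D (lv_mult \<alpha> u v) = lv_mult \<alpha> (D u) v + lv_mult \<alpha> u (D v))"

definition Der :: "(5 \<Rightarrow> 5 \<Rightarrow> 'a::field) \<Rightarrow> ('a^5 \<Rightarrow> 'a^5) set" where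
  "Der \<alpha> = {D. is_derivation \<alpha> D}"

end

theory Submission
  imports Defs
begin

text \<open>
  Write D e_i = \<Sum>_k x_ik e_k. Applying D to e_i e_i = e_i gives (1 - 2 \<alpha>_ki) x_ik = 0
  for k \<noteq> i, and \<Sum>_m \<alpha>_im x_im = 0. So the only off-diagonal entries that can survive
  lie on the two "edges" {2,4} and {2,5}, and they determine the diagonal entries.
  Applying D to e_4 e_5, e_2 e_4 and e_2 e_5 and using \<alpha>_45 \<noteq> 1/2 \<noteq> \<alpha>_54 kills the
  four edge entries as well.
\<close>

lemma UNIV_5: "(UNIV :: 5 set) = {1, 2, 3, 4, 5}"
proof -
  have "card {1, 2, 3, 4, 5 :: 5} = card (UNIV :: 5 set)" by simp
  then show ?thesis using card_subset_eq[of "UNIV :: 5 set" "{1, 2, 3, 4, 5}"] by simp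
qed

lemma sum_UNIV_5: "(\<Sum>j\<in>UNIV. f j) = f (1::5) + f 2 + f 3 + f 4 + f 5"
  unfolding UNIV_5 by (simp add: add.assoc)

lemma lv_basis_nth: "lv_basis i $ k = of_bool (k = i)"
  by (simp add: lv_basis_def axis_def)

lemma lv_mult_nth:
  "lv_mult \<alpha> u v $ k = (\<Sum>j\<in>UNIV. \<alpha> k j * (u$k * v$j + u$j * v$k))"
proof -
  have "lv_mult \<alpha> u v $ k = (\<Sum>i\<in>UNIV. \<Sum>j\<in>UNIV. u$i * v$j * \<alpha> i j * of_bool (i = k)) +
      (\<Sum>i\<in>UNIV. \<Sum>j\<in>UNIV. u$i * v$j * \<alpha> j i * of_bool (j = k))"
    unfolding lv_mult_def sum_component vector_add_component vector_smult_component lv_basis_nth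
    by (simp add: sum.distrib distrib_left mult.assoc eq_commute)
  also have "\<dots> = (\<Sum>i\<in>UNIV. (\<Sum>j\<in>UNIV. u$i * v$j * \<alpha> i j) * of_bool (i = k)) +
      (\<Sum>j\<in>UNIV. (\<Sum>i\<in>UNIV. u$i * v$j * \<alpha> j i) * of_bool (j = k))"
    by (subst (2) sum.swap) (simp only: sum_distrib_right)
  also have "\<dots> = (\<Sum>j\<in>UNIV. \<alpha> k j * (u$k * v$j + u$j * v$k))"
    by (simp add: sum.distrib algebra_simps)
  finally show ?thesis .
qed

lemma lv_mult_basis_left_nth:
  "lv_mult \<alpha> (lv_basis i) w $ k = of_bool (k = i) * (\<Sum>j\<in>UNIV. \<alpha> k j * w$j) + \<alpha> k i * w$k"
proof -
  have "lv_mult \<alpha> (lv_basis i) w $ k =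
      (\<Sum>j\<in>UNIV. of_bool (k = i) * (\<alpha> k j * w$j) + \<alpha> k j * w$k * of_bool (j = i))"
    unfolding lv_mult_nth lv_basis_nth by (intro sum.cong) (simp_all add: algebra_simps)
  then show ?thesis
    by (simp only: sum.distrib sum_distrib_left[symmetric] sum_mult_of_bool_eq finite) simp
qed

lemma lv_mult_basis_right_nth:
  "lv_mult \<alpha> w (lv_basis i) $ k = of_bool (k = i) * (\<Sum>j\<in>UNIV. \<alpha> k j * w$j) + \<alpha> k i * w$k"
proof -
  have "lv_mult \<alpha> w (lv_basis i) = lv_mult \<alpha> (lv_basis i) w"
    by (simp add: vec_eq_iff lv_mult_nth add.commute mult.commute)
  then show ?thesis by (simp add: lv_mult_basis_left_nth)
qed

lemma lv_mult_basis:
  "lv_mult \<alpha> (lv_basis i) (lv_basis j) = \<alpha> i j *s lv_basis i + \<alpha> j i *s lv_basis j"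
  by (simp add: vec_eq_iff lv_mult_basis_left_nth lv_basis_nth)

lemma is_LV_half_swap:
  assumes "(2::'a::field) \<noteq> 0" and "is_LV \<alpha>" and "\<alpha> i j = (1/2 :: 'a)"
  shows "\<alpha> j i = 1/2"
proof -
  have "\<alpha> j i = 1 - \<alpha> i j"
    using assms(2) unfolding is_LV_def by (metis add_diff_cancel_left')
  also have "\<dots> = 1/2"
    using assms(1,3) by (simp add: field_simps)
  finally show ?thesis .
qed

lemma lv_mult_basis_eq_half_iff:
  assumes "(2::'a::field) \<noteq> 0" and "is_LV (\<alpha> :: 5 \<Rightarrow> 5 \<Rightarrow> 'a)"
  shows "lv_mult \<alpha> (lv_basis i) (lv_basis j) = (1/2) *s (lv_basis i + lv_basis j) \<longleftrightarrow> \<alpha> i j = 1/2"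
proof
  assume prod: "lv_mult \<alpha> (lv_basis i) (lv_basis j) = (1/2) *s (lv_basis i + lv_basis j)"
  show "\<alpha> i j = 1/2"
  proof (cases "i = j")
    case True
    then show ?thesis using assms(2) by (simp add: is_LV_def)
  next
    case False
    from arg_cong[OF prod, of "\<lambda>v. v $ i"] False show ?thesis
      by (simp add: lv_mult_basis lv_basis_nth)
  qed
next
  assume half: "\<alpha> i j = 1/2"
  moreover have "\<alpha> j i = 1/2"
    using assms half by (rule is_LV_half_swap)
  ultimately show "lv_mult \<alpha> (lv_basis i) (lv_basis j) = (1/2) *s (lv_basis i + lv_basis j)"
    by (simp only: lv_mult_basis vector_add_ldistrib)
qed

lemma is_derivation_zero: "is_derivation \<alpha> (\<lambda>u. 0)"
  by (simp add: is_derivation_def vec_eq_iff lv_mult_nth)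

lemma derivation_sum:
  assumes "is_derivation \<alpha> D" and "finite A"
  shows "D (\<Sum>i\<in>A. f i) = (\<Sum>i\<in>A. D (f i))"
  using assms(2)
proof (induction A rule: finite_induct)
  case empty
  have "D 0 = D (0 *s 0)" by simp
  also have "\<dots> = 0 *s D 0" using assms(1) unfolding is_derivation_def by blast
  finally show ?case by simp
next
  case (insert x F)
  then show ?case using assms(1) by (simp add: is_derivation_def)
qed

lemma derivation_eq_zero_if_basis:
  assumes "is_derivation \<alpha> D" and "\<And>i. D (lv_basis i) = 0"
  shows "D = (\<lambda>u. 0)"
proof
  fix u
  have "D u = D (\<Sum>i\<in>UNIV. u$i *s lv_basis i)"
    by (simp add: lv_basis_def basis_expansion)
  also have "\<dots> = (\<Sum>i\<in>UNIV. D (u$i *s lv_basis i))"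
    by (rule derivation_sum[OF assms(1)]) simp
  also have "\<dots> = (\<Sum>i\<in>UNIV. u$i *s D (lv_basis i))"
    using assms(1) by (simp add: is_derivation_def)
  finally show "D u = 0" by (simp add: assms(2))
qed

locale LV_derivation =
  fixes \<alpha> :: "5 \<Rightarrow> 5 \<Rightarrow> 'a::field" and D :: "'a^5 \<Rightarrow> 'a^5"
  assumes two_neq_zero: "(2::'a) \<noteq> 0" and LV: "is_LV \<alpha>" and derivation: "is_derivation \<alpha> D"
begin

lemma alpha_diag: "\<alpha> i i = 1/2"
  using LV by (simp add: is_LV_def)

lemma basis_product_nth:
  "\<alpha> i j * D (lv_basis i) $ k + \<alpha> j i * D (lv_basis j) $ k =
     of_bool (k = j) * (\<Sum>m\<in>UNIV. \<alpha> k m * D (lv_basis i) $ m) + \<alpha> k j * D (lv_basis i) $ k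
   + of_bool (k = i) * (\<Sum>m\<in>UNIV. \<alpha> k m * D (lv_basis j) $ m) + \<alpha> k i * D (lv_basis j) $ k"
proof -
  have "\<alpha> i j *s D (lv_basis i) + \<alpha> j i *s D (lv_basis j) = D (lv_mult \<alpha> (lv_basis i) (lv_basis j))"
    using derivation by (simp add: is_derivation_def lv_mult_basis)
  also have "\<dots> = lv_mult \<alpha> (D (lv_basis i)) (lv_basis j) + lv_mult \<alpha> (lv_basis i) (D (lv_basis j))"
    using derivation by (simp add: is_derivation_def)
  finally show ?thesis
    by (simp add: vec_eq_iff lv_mult_basis_left_nth lv_mult_basis_right_nth add.assoc)
qed

lemma basis_image_nth_eq_zero:
  assumes "k \<noteq> i" and "\<alpha> k i \<noteq> 1/2"
  shows "D (lv_basis i) $ k = 0"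
proof -
  have "(1 - 2 * \<alpha> k i) * D (lv_basis i) $ k = 0"
    using basis_product_nth[of i i k] assms(1) two_neq_zero
    by (simp add: alpha_diag field_simps)
  moreover have "1 - 2 * \<alpha> k i \<noteq> 0"
    using assms(2) two_neq_zero by (auto simp: field_simps)
  ultimately show ?thesis by simp
qed

lemma weighted_basis_image_sum_eq_zero:
  "(\<Sum>m\<in>UNIV. \<alpha> i m * D (lv_basis i) $ m) = 0"
proof -
  have "2 * (\<Sum>m\<in>UNIV. \<alpha> i m * D (lv_basis i) $ m) = 0"
    using basis_product_nth[of i i i] by (simp add: alpha_diag algebra_simps)
  with two_neq_zero show ?thesis by simp
qed

end

locale LV_derivation_24_25 = LV_derivation +
  assumes half_24: "\<alpha> 2 4 = 1/2" and half_25: "\<alpha> 2 5 = 1/2"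
    and not_half: "\<And>i j. i \<noteq> j \<Longrightarrow> {i, j} \<noteq> {2, 4} \<Longrightarrow> {i, j} \<noteq> {2, 5} \<Longrightarrow> \<alpha> i j \<noteq> 1/2"
begin

lemma half_42: "\<alpha> 4 2 = 1/2" and half_52: "\<alpha> 5 2 = 1/2"
  using is_LV_half_swap[OF two_neq_zero LV] half_24 half_25 by blast+

lemma not_half_45: "\<alpha> 4 5 \<noteq> 1/2" and not_half_54: "\<alpha> 5 4 \<noteq> 1/2"
  by (rule not_half; simp add: doubleton_eq_iff)+

lemma basis_image_nth_eq_zero_off_edges:
  "k \<noteq> i \<Longrightarrow> {k, i} \<noteq> {2, 4} \<Longrightarrow> {k, i} \<noteq> {2, 5} \<Longrightarrow> D (lv_basis i) $ k = 0"
  by (intro basis_image_nth_eq_zero not_half)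

lemma basis_image_diagonal:
  "D (lv_basis 1) $ 1 = 0" "D (lv_basis 3) $ 3 = 0"
  "D (lv_basis 4) $ 4 = - D (lv_basis 4) $ 2" "D (lv_basis 5) $ 5 = - D (lv_basis 5) $ 2"
  "D (lv_basis 2) $ 2 = - (D (lv_basis 2) $ 4 + D (lv_basis 2) $ 5)"
  using weighted_basis_image_sum_eq_zero[of 1] weighted_basis_image_sum_eq_zero[of 3]
    weighted_basis_image_sum_eq_zero[of 4] weighted_basis_image_sum_eq_zero[of 5]
    weighted_basis_image_sum_eq_zero[of 2] two_neq_zero
  by (simp_all add: sum_UNIV_5 basis_image_nth_eq_zero_off_edges doubleton_eq_iff alpha_diag
      half_24 half_25 half_42 half_52 field_simps eq_neg_iff_add_eq_0)

lemma basis_image_edges: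
  "D (lv_basis 5) $ 2 = 0" "D (lv_basis 4) $ 2 = 0"
  "D (lv_basis 2) $ 5 = 0" "D (lv_basis 2) $ 4 = 0"
proof -
  note simps = sum_UNIV_5 basis_image_nth_eq_zero_off_edges doubleton_eq_iff
    basis_image_diagonal alpha_diag algebra_simps
  have "(\<alpha> 4 5 - \<alpha> 4 2) * D (lv_basis 5) $ 2 = 0"
    using basis_product_nth[of 4 5 4] by (simp add: simps)
  then show "D (lv_basis 5) $ 2 = 0" using half_42 not_half_45
    by (metis mult_eq_0_iff right_minus_eq)
  have "(\<alpha> 5 4 - \<alpha> 5 2) * D (lv_basis 4) $ 2 = 0"
    using basis_product_nth[of 4 5 5] by (simp add: simps)
  then show "D (lv_basis 4) $ 2 = 0" using half_52 not_half_54
    by (metis mult_eq_0_iff right_minus_eq)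
  have "(\<alpha> 2 4 - \<alpha> 5 4) * D (lv_basis 2) $ 5 = 0"
    using basis_product_nth[of 2 4 5] by (simp add: simps)
  then show "D (lv_basis 2) $ 5 = 0" using half_24 not_half_54
    by (metis mult_eq_0_iff right_minus_eq)
  have "(\<alpha> 2 5 - \<alpha> 4 5) * D (lv_basis 2) $ 4 = 0"
    using basis_product_nth[of 2 5 4] by (simp add: simps)
  then show "D (lv_basis 2) $ 4 = 0" using half_25 not_half_45
    by (metis mult_eq_0_iff right_minus_eq)
qed

lemma basis_image_eq_zero: "D (lv_basis i) = 0"
proof -
  have "D (lv_basis i) $ k = 0" for k
  proof -
    have "i \<in> {1, 2, 3, 4, 5}" "k \<in> {1, 2, 3, 4, 5}" by (simp_all add: UNIV_5[symmetric])
    then show ?thesis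
      using basis_image_diagonal basis_image_edges
      by (auto simp: basis_image_nth_eq_zero_off_edges doubleton_eq_iff)
  qed
  then show ?thesis by (simp add: vec_eq_iff)
qed

end

theorem mainTheorem17:
  fixes \<alpha> :: "5 \<Rightarrow> 5 \<Rightarrow> 'a::field"
  assumes char: "(2::'a) \<noteq> 0"
    and LV: "is_LV \<alpha>"
    and h24: "lv_mult \<alpha> (lv_basis 2) (lv_basis 4) = (1/2) *s (lv_basis 2 + lv_basis 4)"
    and h25: "lv_mult \<alpha> (lv_basis 2) (lv_basis 5) = (1/2) *s (lv_basis 2 + lv_basis 5)"
    and hother: "\<And>i j. i \<noteq> j \<Longrightarrow> {i, j} \<noteq> {2, 4} \<Longrightarrow> {i, j} \<noteq> {2, 5} \<Longrightarrow>
        lv_mult \<alpha> (lv_basis i) (lv_basis j) \<noteq> (1/2) *s (lv_basis i + lv_basis j)"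
  shows "Der \<alpha> = {\<lambda>u. 0}"
proof
  show "{\<lambda>u. 0} \<subseteq> Der \<alpha>"
    by (simp add: Der_def is_derivation_zero)
next
  note half_iff = lv_mult_basis_eq_half_iff[OF char LV]
  have half: "\<alpha> 2 4 = 1/2" "\<alpha> 2 5 = 1/2"
    using h24 h25 half_iff by blast+
  have not_half: "\<alpha> i j \<noteq> 1/2" if "i \<noteq> j" "{i, j} \<noteq> {2, 4}" "{i, j} \<noteq> {2, 5}" for i j
    using hother[OF that] half_iff by blast
  show "Der \<alpha> \<subseteq> {\<lambda>u. 0}"
  proof
    fix D assume "D \<in> Der \<alpha>"
    then have "is_derivation \<alpha> D" by (simp add: Der_def)
    then interpret LV_derivation_24_25 \<alpha> D
      using char LV half not_half by unfold_locales blast+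
    show "D \<in> {\<lambda>u. 0}"
      using derivation_eq_zero_if_basis[OF derivation basis_image_eq_zero] by simp
  qed
qed

end
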